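(* Let $n$ and $0<\delta\le1$ be such that $\delta n/2$ and $n/2$ are integers, let $W=\{w_1,\dots,w_n\}$, $M=\{m_1,\dots,m_n\}$, and let $\bar x=(x^i_j)$, $\bar y=(y^i_j)$, $1\le i,j\le\delta n/2$, be bit arrays with $\mathrm{DISJ}(\bar x,\bar y)=1$. Then the marriage market with the preferences $P(\bar x,\bar y)$ described in the context has a unique stable marriage, namely $\mu_1=\{(m_i,w_{i+n/2}) : 1\le i\le n/2\}\cup\{(m_{i+n/2},w_i): 1\le i\le n/2\}$.
   Context: Participants are split into high ($w_1,\dots,w_{\delta n/2}$; $m_1,\dots,m_{\delta n/2}$), mid (indices $\delta n/2+1,\dots,n/2$) and low (indices $n/2+1,\dots,n$). Preferences $P(\bar x,\bar y)$: each low woman ranks $m_1\succ m_2\succ\dots\succ m_n$ and each low man ranks $w_1\succ\dots\succ w_n$. Each mid woman ranks $m_{n/2+1}\succ\dots\succ m_n\succ m_1\succ\dots\succ m_{n/2}$ (low, then high, then mid, each in index order), and mid men symmetrically over women. A high woman $w_i$ ranks, in order: the high men $m_j$ with $x^i_j=1$; then all low men; then all mid men; then the high men $m_j$ with $x^i_j=0$; within each group by increasing index. A high man $m_j$ ranks: high women $w_i$ with $y^i_j=1$; all low women; all mid women; high women $w_i$ with $y^i_j=0$; within each group by increasing index. All lists are full. A perfect marriage is stable if there is no pair $(w,m)$ each preferring the other to their spouse. $\mathrm{DISJ}(\bar x,\bar y)=1$ iff there is no $(i,j)$ with $x^i_j=y^i_j=1$. *)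

theory Defs
  imports Complex_Main
begin

text \<open>Participants: women w_1..w_n and men m_1..m_n, represented by their indices in {1..n}.
  k = delta*n/2 is the number of high participants on each side; indices 1..k are high,
  k+1..n/2 are mid, n/2+1..n are low.\<close>

definition key_w :: "nat \<Rightarrow> nat \<Rightarrow> (nat \<Rightarrow> nat \<Rightarrow> bool) \<Rightarrow> nat \<Rightarrow> nat \<Rightarrow> nat \<times> nat" where
  "key_w n k x i j =
     (if n div 2 < i then (0, j)                       \<comment> \<open>low woman: m_1 > m_2 > ... > m_n\<close>
      else if k < i then                               \<comment> \<open>mid woman: low, then high, then mid\<close>
        (if n div 2 < j then (0, j) else if j \<le> k then (1, j) else (2, j))
      else                                             \<comment> \<open>high woman w_i\<close>
        (if j \<le> k \<and> x i j then (0, j)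
         else if n div 2 < j then (1, j)
         else if k < j then (2, j)
         else (3, j)))"

definition key_m :: "nat \<Rightarrow> nat \<Rightarrow> (nat \<Rightarrow> nat \<Rightarrow> bool) \<Rightarrow> nat \<Rightarrow> nat \<Rightarrow> nat \<times> nat" where
  "key_m n k y j i =
     (if n div 2 < j then (0, i)
      else if k < j then
        (if n div 2 < i then (0, i) else if i \<le> k then (1, i) else (2, i))
      else
        (if i \<le> k \<and> y i j then (0, i)
         else if n div 2 < i then (1, i)
         else if k < i then (2, i)
         else (3, i)))"

definition lex_less :: "nat \<times> nat \<Rightarrow> nat \<times> nat \<Rightarrow> bool" where
  "lex_less a b \<longleftrightarrow> fst a < fst b \<or> (fst a = fst b \<and> snd a < snd b)"

definition w_prefers where
  "w_prefers n k x i j j' \<longleftrightarrow> lex_less (key_w n k x i j) (key_w n k x i j')"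

definition m_prefers where
  "m_prefers n k y j i i' \<longleftrightarrow> lex_less (key_m n k y j i) (key_m n k y j i')"

definition perfect_marriage :: "nat \<Rightarrow> (nat \<Rightarrow> nat) \<Rightarrow> bool" where
  "perfect_marriage n mu \<longleftrightarrow> bij_betw mu {1..n} {1..n}"

definition stable :: "nat \<Rightarrow> nat \<Rightarrow> (nat \<Rightarrow> nat \<Rightarrow> bool) \<Rightarrow> (nat \<Rightarrow> nat \<Rightarrow> bool) \<Rightarrow> (nat \<Rightarrow> nat) \<Rightarrow> bool" where
  "stable n k x y mu \<longleftrightarrow> perfect_marriage n mu \<and>
     \<not> (\<exists>i\<in>{1..n}. \<exists>j\<in>{1..n}.
           w_prefers n k x i j (mu i) \<and>
           m_prefers n k y j i (inv_into {1..n} mu j))"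

definition DISJ :: "nat \<Rightarrow> (nat \<Rightarrow> nat \<Rightarrow> bool) \<Rightarrow> (nat \<Rightarrow> nat \<Rightarrow> bool) \<Rightarrow> bool" where
  "DISJ k x y \<longleftrightarrow> \<not> (\<exists>i\<in>{1..k}. \<exists>j\<in>{1..k}. x i j \<and> y i j)"

text \<open>mu_1: m_i -- w_{i+n/2} and m_{i+n/2} -- w_i, as a map from women to husbands.\<close>
definition mu1 :: "nat \<Rightarrow> nat \<Rightarrow> nat" where
  "mu1 n i = (if i \<le> n div 2 then i + n div 2 else i - n div 2)"

end

theory Submission
  imports Defs
begin

text \<open>In a stable marriage every high or mid woman w marries a low man. Otherwise, by counting,
  some low woman w' marries a low man too, and w with the husband of w' is a blocking pair
  unless w ranks her own (then high) husband m first; in that case w' with m is a blocking pair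
  unless m ranks w first as well, which DISJ excludes. Between the two halves both sides rank
  their possible partners by index, so stability makes the marriage increasing on each half,
  hence an index shift, which is mu1. Conversely, the same index orders and, for a pair of
  high participants, DISJ show that mu1 has no blocking pair.\<close>

lemma strict_mono_on_interval_eq_shift:
  fixes f :: "nat \<Rightarrow> nat"
  assumes strict: "strict_mono_on {a..b} f" and into: "f ` {a..b} \<subseteq> {c..c + (b - a)}"
    and t: "t \<in> {a..b}"
  shows "f t = c + (t - a)"
proof -
  have inj: "inj_on f {a..b}" using strict by (rule strict_mono_on_imp_inj_on)
  have mono: "mono_on {a..b} f" using strict by (rule strict_mono_on_imp_mono_on)
  have ft: "f t \<in> {c..c + (b - a)}" using into t by blast
  have "f ` {a..t} \<subseteq> {c..f t}"
  proof (rule image_subsetI)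
    fix s assume "s \<in> {a..t}"
    then have s: "s \<in> {a..b}" "s \<le> t" using t by auto
    have "f s \<in> {c..c + (b - a)}" using into s(1) by blast
    then show "f s \<in> {c..f t}" using mono_onD[OF mono s(1) t s(2)] by simp
  qed
  moreover have "card (f ` {a..t}) = Suc t - a"
    using inj_on_subset[OF inj] t by (subst card_image) auto
  ultimately have lower: "Suc t - a \<le> Suc (f t) - c"
    by (metis card_atLeastAtMost card_mono finite_atLeastAtMost)
  have "f ` {t..b} \<subseteq> {f t..c + (b - a)}"
  proof (rule image_subsetI)
    fix s assume "s \<in> {t..b}"
    then have s: "s \<in> {a..b}" "t \<le> s" using t by auto
    have "f s \<in> {c..c + (b - a)}" using into s(1) by blast
    then show "f s \<in> {f t..c + (b - a)}" using mono_onD[OF mono t s(1) s(2)] by simp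
  qed
  moreover have "card (f ` {t..b}) = Suc b - t"
    using inj_on_subset[OF inj] t by (subst card_image) auto
  ultimately have upper: "Suc b - t \<le> Suc (c + (b - a)) - f t"
    by (metis card_atLeastAtMost card_mono finite_atLeastAtMost)
  show ?thesis using lower upper ft t by auto
qed

lemma inj_on_self_map_crosses:
  assumes inj: "inj_on f S" and maps: "f ` S \<subseteq> S" and fin: "finite S"
    and A: "A \<subseteq> S" "card A \<le> card (S - A)" and i: "i \<in> A" "f i \<in> A"
  shows "\<exists>a\<in>S - A. f a \<in> S - A"
proof (rule ccontr)
  assume "\<not> ?thesis"
  then have sub: "f ` (S - A) \<subseteq> A" using maps by blast
  have "card (f ` (S - A)) = card (S - A)"
    using inj_on_subset[OF inj] by (intro card_image) auto
  moreover have finA: "finite A" using A(1) fin by (rule finite_subset)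
  then have "card (f ` (S - A)) \<le> card A" using sub by (rule card_mono)
  ultimately have "f ` (S - A) = A" using finA sub A(2) by (intro card_subset_eq) auto
  then obtain a where a: "a \<in> S - A" "f a = f i" using i by (metis imageE)
  have "a \<in> S" "i \<in> S" using a i A by auto
  then have "a = i" by (rule inj_onD[OF inj a(2)])
  then show False using a(1) i(1) by simp
qed

lemma lex_less_total: "snd a \<noteq> snd b \<Longrightarrow> lex_less a b \<or> lex_less b a"
  by (auto simp: lex_less_def)

lemma w_prefers_total: "j \<noteq> j' \<Longrightarrow> w_prefers n k x i j j' \<or> w_prefers n k x i j' j"
  unfolding w_prefers_def by (rule lex_less_total) (simp add: key_w_def)

lemma m_prefers_total: "i \<noteq> i' \<Longrightarrow> m_prefers n k y j i i' \<or> m_prefers n k y j i' i"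
  unfolding m_prefers_def by (rule lex_less_total) (simp add: key_m_def)

lemma w_prefers_low_woman_iff: "n div 2 < i \<Longrightarrow> w_prefers n k x i j j' \<longleftrightarrow> j < j'"
  by (simp add: w_prefers_def key_w_def lex_less_def)

lemma m_prefers_low_man_iff: "n div 2 < j \<Longrightarrow> m_prefers n k y j i i' \<longleftrightarrow> i < i'"
  by (simp add: m_prefers_def key_m_def lex_less_def)

lemma w_prefers_low_men_iff:
  "k \<le> n div 2 \<Longrightarrow> n div 2 < j \<Longrightarrow> n div 2 < j' \<Longrightarrow> w_prefers n k x i j j' \<longleftrightarrow> j < j'"
  by (auto simp: w_prefers_def key_w_def lex_less_def)

lemma m_prefers_low_women_iff:
  "k \<le> n div 2 \<Longrightarrow> n div 2 < i \<Longrightarrow> n div 2 < i' \<Longrightarrow> m_prefers n k y j i i' \<longleftrightarrow> i < i'"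
  by (auto simp: m_prefers_def key_m_def lex_less_def)

lemma w_prefers_over_low_manD:
  assumes "w_prefers n k x i j j'" "i \<le> n div 2" "j \<le> n div 2" "n div 2 < j'"
  shows "i \<le> k \<and> j \<le> k \<and> x i j"
  using assms by (auto simp: w_prefers_def key_w_def lex_less_def split: if_splits)

lemma m_prefers_over_low_womanD:
  assumes "m_prefers n k y j i i'" "j \<le> n div 2" "i \<le> n div 2" "n div 2 < i'"
  shows "i \<le> k \<and> j \<le> k \<and> y i j"
  using assms by (auto simp: m_prefers_def key_m_def lex_less_def split: if_splits)

lemma stable_bij: "stable n k x y mu \<Longrightarrow> bij_betw mu {1..n} {1..n}"
  by (simp add: stable_def perfect_marriage_def)

lemma stable_no_blocking_pair:
  assumes st: "stable n k x y mu" and i: "i \<in> {1..n}" and r: "r \<in> {1..n}"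
    and "w_prefers n k x i (mu r) (mu i)"
  shows "\<not> m_prefers n k y (mu r) i r"
proof -
  have bij: "bij_betw mu {1..n} {1..n}" using st by (rule stable_bij)
  then have "mu r \<in> {1..n}" using r by (meson bij_betwE)
  moreover have "inv_into {1..n} mu (mu r) = r"
    using bij r by (simp add: bij_betw_def inv_into_f_f)
  ultimately show ?thesis using st i assms(4) unfolding stable_def by metis
qed

lemma stable_strict_mono_on:
  assumes st: "stable n k x y mu" and I: "I \<subseteq> {1..n}"
    and w: "\<And>i j j'. i \<in> I \<Longrightarrow> j \<in> mu ` I \<Longrightarrow> j' \<in> mu ` I \<Longrightarrow> j < j' \<Longrightarrow> w_prefers n k x i j j'"
    and m: "\<And>j i i'. j \<in> mu ` I \<Longrightarrow> i \<in> I \<Longrightarrow> i' \<in> I \<Longrightarrow> i < i' \<Longrightarrow> m_prefers n k y j i i'"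
  shows "strict_mono_on I mu"
proof (rule strict_mono_onI)
  fix i r assume ir: "i \<in> I" "r \<in> I" "i < r"
  have "inj_on mu {1..n}" using stable_bij[OF st] by (rule bij_betw_imp_inj_on)
  then have "mu i \<noteq> mu r" using ir I by (metis inj_on_contraD less_irrefl subsetD)
  moreover have "\<not> mu r < mu i"
  proof
    assume "mu r < mu i"
    then have "w_prefers n k x i (mu r) (mu i)" using w ir by blast
    moreover have "m_prefers n k y (mu r) i r" using m ir by blast
    ultimately show False using stable_no_blocking_pair[OF st] ir I by blast
  qed
  ultimately show "mu i < mu r" by simp
qed

lemma stable_husband_gt_half:
  assumes st: "stable n k x y mu" and D: "DISJ k x y" and i: "i \<in> {1..n div 2}"
  shows "n div 2 < mu i"
proof (rule ccontr)
  define h where "h = n div 2"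
  assume "\<not> n div 2 < mu i"
  then have mui: "mu i \<le> h" by (simp add: h_def)
  have bij: "bij_betw mu {1..n} {1..n}" using st by (rule stable_bij)
  have iin: "i \<in> {1..n}" and ih: "1 \<le> i" "i \<le> h" using i by (auto simp: h_def)
  have "mu i \<in> {1..n}" using bij iin by (meson bij_betwE)
  then have "mu i \<in> {1..h}" using mui by simp
  moreover have "card {1..h} \<le> card ({1..n} - {1..h})"
  proof -
    have "{1..n} - {1..h} = {h + 1..n}" by auto
    then show ?thesis by (simp add: h_def)
  qed
  moreover have "{1..h} \<subseteq> {1..n}" "i \<in> {1..h}" using ih by (auto simp: h_def)
  moreover have "mu ` {1..n} \<subseteq> {1..n}" using bij by (simp add: bij_betw_imp_surj_on)
  ultimately have "\<exists>a\<in>{1..n} - {1..h}. mu a \<in> {1..n} - {1..h}"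
    using inj_on_self_map_crosses[OF bij_betw_imp_inj_on[OF bij]] by blast
  then obtain a where "a \<in> {1..n} - {1..h}" "mu a \<in> {1..n} - {1..h}" ..
  then have ain: "a \<in> {1..n}" and ah: "h < a" "h < mu a" by auto
  show False
  proof (cases "i \<le> k \<and> mu i \<le> k \<and> x i (mu i)")
    case True
    then have "\<not> y i (mu i)" using D ih \<open>mu i \<in> {1..h}\<close> unfolding DISJ_def by auto
    then have "\<not> m_prefers n k y (mu i) i a"
      using m_prefers_over_low_womanD[of n k y "mu i" i a] mui ih ah by (auto simp: h_def)
    moreover have "a \<noteq> i" using ah ih by simp
    ultimately have "m_prefers n k y (mu i) a i" using m_prefers_total by blast
    moreover have "w_prefers n k x a (mu i) (mu a)"
      using w_prefers_low_woman_iff ah mui by (simp add: h_def)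
    ultimately show False using stable_no_blocking_pair[OF st ain iin] by blast
  next
    case False
    then have "\<not> w_prefers n k x i (mu i) (mu a)"
      using w_prefers_over_low_manD[of n k x i "mu i" "mu a"] mui ih ah by (auto simp: h_def)
    moreover have "mu a \<noteq> mu i" using ah mui by simp
    ultimately have "w_prefers n k x i (mu a) (mu i)" using w_prefers_total by blast
    moreover have "m_prefers n k y (mu a) i a"
      using m_prefers_low_man_iff ah ih by (simp add: h_def)
    ultimately show False using stable_no_blocking_pair[OF st iin ain] by blast
  qed
qed

lemma stable_husband_first_half:
  assumes st: "stable n k x y mu" and kh: "k \<le> n div 2" and D: "DISJ k x y" and ev: "even n"
    and t: "t \<in> {1..n div 2}"
  shows "mu t = t + n div 2"
proof -
  obtain h where n: "n = h + h" using ev by (metis evenE mult_2)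
  then have half: "n div 2 = h" by simp
  have low: "h < mu i" if "i \<in> {1..h}" for i
    using stable_husband_gt_half[OF st D] that by (simp add: half)
  have range: "mu i \<in> {1..n}" if "i \<in> {1..h}" for i
  proof -
    have "i \<in> {1..n}" using that n by simp
    then show ?thesis using stable_bij[OF st] by (meson bij_betwE)
  qed
  have mono: "strict_mono_on {1..h} mu"
  proof (rule stable_strict_mono_on[OF st])
    show "{1..h} \<subseteq> {1..n}" using n by auto
    show "w_prefers n k x i j j'"
      if "i \<in> {1..h}" "j \<in> mu ` {1..h}" "j' \<in> mu ` {1..h}" "j < j'" for i j j'
      using that low w_prefers_low_men_iff[OF kh] by (auto simp: half)
    show "m_prefers n k y j i i'"
      if "j \<in> mu ` {1..h}" "i \<in> {1..h}" "i' \<in> {1..h}" "i < i'" for j i i'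
      using that low m_prefers_low_man_iff by (auto simp: half)
  qed
  have "mu ` {1..h} \<subseteq> {h + 1..h + 1 + (h - 1)}"
  proof (rule image_subsetI)
    fix i assume "i \<in> {1..h}"
    then show "mu i \<in> {h + 1..h + 1 + (h - 1)}" using low range n by fastforce
  qed
  then have "mu t = h + 1 + (t - 1)"
    by (rule strict_mono_on_interval_eq_shift[OF mono]) (use t in \<open>simp add: half\<close>)
  then show ?thesis using t by (simp add: half)
qed

lemma stable_husband_second_half:
  assumes st: "stable n k x y mu" and kh: "k \<le> n div 2" and D: "DISJ k x y" and ev: "even n"
    and t: "t \<in> {1..n div 2}"
  shows "mu (t + n div 2) = t"
proof -
  obtain h where n: "n = h + h" using ev by (metis evenE mult_2)
  then have half: "n div 2 = h" by simp
  have bij: "bij_betw mu {1..n} {1..n}" using st by (rule stable_bij)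
  have high: "mu i \<in> {1..h}" if i: "i \<in> {h + 1..h + h}" for i
  proof -
    have iin: "i \<in> {1..n}" using i n by auto
    then have mu_i: "mu i \<in> {1..n}" using bij by (meson bij_betwE)
    have "\<not> h < mu i"
    proof
      assume "h < mu i"
      moreover have "mu i \<le> h + h" using mu_i n by simp
      ultimately have "mu i - h \<in> {1..n div 2}" unfolding half by auto
      then have "mu (mu i - h) = mu i"
        using stable_husband_first_half[OF st kh D ev] \<open>h < mu i\<close> by (simp add: half)
      moreover have "mu i - h \<in> {1..n}" using \<open>h < mu i\<close> mu_i by auto
      ultimately have "mu i - h = i" using bij_betw_imp_inj_on[OF bij] iin by (metis inj_onD)
      then show False using i mu_i n \<open>h < mu i\<close> by simp arith
    qed
    then show ?thesis using mu_i by simp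
  qed
  have mono: "strict_mono_on {h + 1..h + h} mu"
  proof (rule stable_strict_mono_on[OF st])
    show "{h + 1..h + h} \<subseteq> {1..n}" using n by auto
    show "w_prefers n k x i j j'"
      if "i \<in> {h + 1..h + h}" "j \<in> mu ` {h + 1..h + h}" "j' \<in> mu ` {h + 1..h + h}" "j < j'"
      for i j j'
      using that w_prefers_low_woman_iff by (auto simp: half)
    show "m_prefers n k y j i i'"
      if "j \<in> mu ` {h + 1..h + h}" "i \<in> {h + 1..h + h}" "i' \<in> {h + 1..h + h}" "i < i'"
      for j i i'
      using that m_prefers_low_women_iff[OF kh] by (auto simp: half)
  qed
  have "mu ` {h + 1..h + h} \<subseteq> {1..1 + (h + h - (h + 1))}"
    using high t by (auto simp: half)
  then have "mu (t + h) = 1 + (t + h - (h + 1))"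
    by (rule strict_mono_on_interval_eq_shift[OF mono]) (use t in \<open>simp add: half\<close>)
  then show ?thesis using t by (simp add: half)
qed

lemma stable_eq_mu1:
  assumes "stable n k x y mu" "k \<le> n div 2" "DISJ k x y" "even n" and i: "i \<in> {1..n}"
  shows "mu i = mu1 n i"
proof (cases "i \<le> n div 2")
  case True
  then show ?thesis using stable_husband_first_half[OF assms(1-4)] i by (simp add: mu1_def)
next
  case False
  then have "i - n div 2 \<in> {1..n div 2}" using i \<open>even n\<close> by auto
  from stable_husband_second_half[OF assms(1-4) this] show ?thesis using False by (simp add: mu1_def)
qed

lemma mu1_mem: "even n \<Longrightarrow> i \<in> {1..n} \<Longrightarrow> mu1 n i \<in> {1..n}"
  by (auto simp: mu1_def elim!: evenE)

lemma mu1_mu1: "even n \<Longrightarrow> i \<in> {1..n} \<Longrightarrow> mu1 n (mu1 n i) = i"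
  by (auto simp: mu1_def elim!: evenE)

lemma bij_betw_mu1: "even n \<Longrightarrow> bij_betw (mu1 n) {1..n} {1..n}"
  using mu1_mem mu1_mu1 by (intro bij_betw_byWitness[where f' = "mu1 n"]) blast+

lemma inv_into_mu1: "even n \<Longrightarrow> j \<in> {1..n} \<Longrightarrow> inv_into {1..n} (mu1 n) j = mu1 n j"
  using bij_betw_imp_inj_on[OF bij_betw_mu1] mu1_mem mu1_mu1 by (metis inv_into_f_eq)

lemma mu1_no_blocking_pair:
  assumes ev: "even n" and kh: "k \<le> n div 2" and D: "DISJ k x y"
    and i: "i \<in> {1..n}" and j: "j \<in> {1..n}" and w: "w_prefers n k x i j (mu1 n i)"
  shows "\<not> m_prefers n k y j i (mu1 n j)"
proof -
  obtain h where n: "n = h + h" using ev by (metis evenE mult_2)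
  then have half: "n div 2 = h" by simp
  consider "h < i" | "i \<le> h" "h < j" | "i \<le> h" "j \<le> h" by linarith
  then show ?thesis
  proof cases
    case 1
    then have "mu1 n i = i - h" by (simp add: mu1_def half)
    then have "j < i - h" using w w_prefers_low_woman_iff[of n i] 1 by (simp add: half)
    moreover have "i \<le> h + h" using i n by simp
    ultimately have "j \<le> h" by arith
    then have "mu1 n j = j + h" by (simp add: mu1_def half)
    moreover have "h < j + h" using j by simp
    ultimately show ?thesis
      using 1 \<open>j < i - h\<close> m_prefers_low_women_iff[OF kh, of i "j + h"] by (simp add: half)
  next
    case 2
    then have "mu1 n i = i + h" "mu1 n j = j - h" by (simp_all add: mu1_def half)
    then have "j < i + h" using w w_prefers_low_men_iff[OF kh, of j "i + h"] 2 i by (simp add: half)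
    then show ?thesis
      using 2 \<open>mu1 n j = j - h\<close> m_prefers_low_man_iff[of n j] by (simp add: half)
  next
    case 3
    then have "mu1 n i = i + h" "mu1 n j = j + h" by (simp_all add: mu1_def half)
    then have "h < mu1 n i" "h < mu1 n j" using i j by auto
    have "i \<le> k \<and> j \<le> k \<and> x i j"
      using w_prefers_over_low_manD[OF w] 3 \<open>h < mu1 n i\<close> by (simp add: half)
    moreover have "m_prefers n k y j i (mu1 n j) \<Longrightarrow> y i j"
      using m_prefers_over_low_womanD[of n k y j i "mu1 n j"] 3 \<open>h < mu1 n j\<close> by (simp add: half)
    ultimately show ?thesis using D i j unfolding DISJ_def by auto
  qed
qed

lemma stable_mu1:
  assumes "even n" "k \<le> n div 2" "DISJ k x y"
  shows "stable n k x y (mu1 n)"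
  unfolding stable_def perfect_marriage_def
  using bij_betw_mu1[OF assms(1)] inv_into_mu1[OF assms(1)] mu1_no_blocking_pair[OF assms]
  by simp

theorem lemma16:
  fixes n :: nat and \<delta> :: real and k :: nat
    and x y :: "nat \<Rightarrow> nat \<Rightarrow> bool"
  assumes "0 < \<delta>" and "\<delta> \<le> 1"
    and "even n"
    and "real k = \<delta> * real n / 2"
    and "DISJ k x y"
  shows "stable n k x y (mu1 n) \<and>
         (\<forall>mu. stable n k x y mu \<longrightarrow> (\<forall>i\<in>{1..n}. mu i = mu1 n i))"
proof -
  have "\<delta> * real n \<le> real n" using assms(1,2) by (simp add: mult_left_le_one_le)
  then have "real k \<le> real n / 2" using assms(4) by simp
  then have kh: "k \<le> n div 2" by linarith
  show ?thesis using stable_mu1[OF assms(3) kh assms(5)] stable_eq_mu1[OF _ kh assms(5,3)] by blast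
qed

end
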